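(* Let $0<k\le16/(3\sqrt3)$, and let $t_1(k)\le t_2(k)$ be the real zeros of $8t^3-8t+k$ in the interval $(0,1)$ (they coincide, equal to $1/\sqrt3$, when $k=16/(3\sqrt3)$). For $x=e^{i\theta}$ on the unit circle with $\cos\theta\neq 0$ set $$y_{1}(x)=\frac{k+\sqrt{k^2-16\cos^2\theta\,(3-4\cos^2\theta)}}{4\cos\theta},\qquad y_{2}(x)=\frac{k-\sqrt{k^2-16\cos^2\theta\,(3-4\cos^2\theta)}}{4\cos\theta}.$$ Then: if $|\cos\theta|=t_1(k)$ then $|y_2(x)|=1$; and if $|\cos\theta|=t_2(k)$ then $|y_1(x)|=1$ when $0<k\le2\sqrt2$, and $|y_2(x)|=1$ when $2\sqrt2\le k\le16/(3\sqrt3)$.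
   Context: $y_1(x),y_2(x)$ are the two roots in $y$ of $(x+x^{-1})y^2-ky-(x^3+x^{-3})=0$ (which equals $-y^3R_k(x/y,1/(xy))$ for $R_k(x,y)=y^3-y+x^3-x+kxy$). Here $\sqrt{\cdot}$ is the principal square root. For $0<k<16/(3\sqrt3)$ the cubic $8t^3-8t+k$ has exactly two zeros in $(0,1)$, with $t_1(k)<1/\sqrt3<t_2(k)$. *)

theory Defs
  imports "HOL-Analysis.Analysis"
begin

definition cubic_zeros :: "real \<Rightarrow> real set" where
  "cubic_zeros k = {t. 0 < t \<and> t < 1 \<and> 8*t^3 - 8*t + k = 0}"

definition t1 :: "real \<Rightarrow> real" where
  "t1 k = Min (cubic_zeros k)"

definition t2 :: "real \<Rightarrow> real" where
  "t2 k = Max (cubic_zeros k)"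

text \<open>The two roots y_1, y_2 at x = e^(i theta), with the principal (complex) square root.\<close>
definition y1 :: "real \<Rightarrow> real \<Rightarrow> complex" where
  "y1 k \<theta> = (complex_of_real k + csqrt (complex_of_real (k^2 - 16*(cos \<theta>)^2*(3 - 4*(cos \<theta>)^2))))
              / complex_of_real (4 * cos \<theta>)"

definition y2 :: "real \<Rightarrow> real \<Rightarrow> complex" where
  "y2 k \<theta> = (complex_of_real k - csqrt (complex_of_real (k^2 - 16*(cos \<theta>)^2*(3 - 4*(cos \<theta>)^2))))
              / complex_of_real (4 * cos \<theta>)"

end

theory Submission
  imports Defs
begin

text \<open>If \<open>t\<close> is a zero of \<open>8t\<^sup>3 - 8t + k\<close> and \<open>\<bar>cos \<theta>\<bar> = t\<close>, then \<open>k = 8t - 8t\<^sup>3\<close> turns the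
  discriminant into the perfect square \<open>(4t(2t\<^sup>2 - 1))\<^sup>2\<close>, and the root
  \<open>(k + 4t(2t\<^sup>2 - 1)) / (4 cos \<theta>)\<close> equals \<open>t / cos \<theta> = \<plusminus>1\<close>. It is \<open>y\<^sub>1\<close> when \<open>2t\<^sup>2 \<ge> 1\<close> and \<open>y\<^sub>2\<close>
  when \<open>2t\<^sup>2 \<le> 1\<close>, so it remains to place \<open>t\<^sub>1\<close> and \<open>t\<^sub>2\<close> relative to \<open>1/\<surd>2\<close>, where
  \<open>8t - 8t\<^sup>3\<close> takes the value \<open>2\<surd>2\<close>. Below \<open>1/\<surd>3\<close> (the maximum of \<open>8t - 8t\<^sup>3\<close>) there is
  a zero, so \<open>t\<^sub>1 \<le> 1/\<surd>3\<close>; the location of \<open>t\<^sub>2\<close> follows from the intermediate value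
  theorem for \<open>k \<le> 2\<surd>2\<close> and from the factorisation
  \<open>8t - 8t\<^sup>3 - 2\<surd>2 = -8 (t - 1/\<surd>2) (t\<^sup>2 + t/\<surd>2 - 1/2)\<close> for \<open>k \<ge> 2\<surd>2\<close>.\<close>

lemma csqrt_discriminant_at_cubic_zero:
  fixes c k t :: real
  assumes "8*t^3 - 8*t + k = 0" "\<bar>c\<bar> = t"
  shows "csqrt (complex_of_real (k^2 - 16*c^2*(3 - 4*c^2))) = complex_of_real (4*t*\<bar>2*t^2 - 1\<bar>)"
proof -
  have c2: "c^2 = t^2" using assms(2) by (metis power2_abs)
  have k: "k = 8*t - 8*t^3" using assms(1) by simp
  have "k^2 - 16*c^2*(3 - 4*c^2) = (4*t*(2*t^2 - 1))^2"
    unfolding k c2 by (simp add: algebra_simps power2_eq_square power3_eq_cube)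
  also have "\<dots> = (4*t*\<bar>2*t^2 - 1\<bar>)^2" by (simp add: power_mult_distrib)
  finally have "k^2 - 16*c^2*(3 - 4*c^2) = (4*t*\<bar>2*t^2 - 1\<bar>)^2" .
  moreover have "0 \<le> 4*t*\<bar>2*t^2 - 1\<bar>" using assms(2) by auto
  ultimately show ?thesis by (simp add: csqrt_of_real)
qed

lemma cmod_root_at_cubic_zero:
  fixes k t \<theta> :: real
  assumes "8*t^3 - 8*t + k = 0" "\<bar>cos \<theta>\<bar> = t" "0 < t"
  shows "cmod (complex_of_real ((k + 4*t*(2*t^2 - 1)) / (4 * cos \<theta>))) = 1"
proof -
  have "k + 4*t*(2*t^2 - 1) = 4*t"
    using assms(1) by (simp add: algebra_simps power2_eq_square power3_eq_cube)
  then show ?thesis unfolding norm_of_real using assms(2,3) by simp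
qed

lemma cmod_y1_at_cubic_zero:
  fixes k t \<theta> :: real
  assumes "8*t^3 - 8*t + k = 0" "\<bar>cos \<theta>\<bar> = t" "0 < t" "1/2 \<le> t^2"
  shows "cmod (y1 k \<theta>) = 1"
proof -
  have "y1 k \<theta> = complex_of_real ((k + 4*t*\<bar>2*t^2 - 1\<bar>) / (4 * cos \<theta>))"
    unfolding y1_def csqrt_discriminant_at_cubic_zero[OF assms(1,2)]
    by (simp only: of_real_add of_real_divide)
  also have "\<bar>2*t^2 - 1\<bar> = 2*t^2 - 1" using assms(4) by simp
  finally show ?thesis using cmod_root_at_cubic_zero[OF assms(1-3)] by simp
qed

lemma cmod_y2_at_cubic_zero:
  fixes k t \<theta> :: real
  assumes "8*t^3 - 8*t + k = 0" "\<bar>cos \<theta>\<bar> = t" "0 < t" "t^2 \<le> 1/2"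
  shows "cmod (y2 k \<theta>) = 1"
proof -
  have "y2 k \<theta> = complex_of_real ((k - 4*t*\<bar>2*t^2 - 1\<bar>) / (4 * cos \<theta>))"
    unfolding y2_def csqrt_discriminant_at_cubic_zero[OF assms(1,2)]
    by (simp only: of_real_diff of_real_divide)
  also have "k - 4*t*\<bar>2*t^2 - 1\<bar> = k + 4*t*(2*t^2 - 1)" using assms(4) by (simp add: algebra_simps)
  finally show ?thesis using cmod_root_at_cubic_zero[OF assms(1-3)] by simp
qed

lemma finite_cubic_zeros: "finite (cubic_zeros k)"
proof (rule finite_subset)
  show "cubic_zeros k \<subseteq> {t. poly [:k, -8, 0, 8:] t = 0}"
    unfolding cubic_zeros_def by (auto simp: algebra_simps power3_eq_cube)
  show "finite {t. poly [:k, -8, 0, 8:] t = (0::real)}"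
    by (rule poly_roots_finite) simp
qed

lemma cubic_zero_between_decreasing:
  fixes a b k :: real
  assumes "a \<le> b" "8*b^3 - 8*b + k \<le> 0" "0 \<le> 8*a^3 - 8*a + k"
  shows "\<exists>t\<in>{a..b}. 8*t^3 - 8*t + k = 0"
  using IVT2[of "\<lambda>t. 8*t^3 - 8*t + k" b 0 a] assms by (auto intro!: continuous_intros)

lemma cubic_zero_between_increasing:
  fixes a b k :: real
  assumes "a \<le> b" "8*a^3 - 8*a + k \<le> 0" "0 \<le> 8*b^3 - 8*b + k"
  shows "\<exists>t\<in>{a..b}. 8*t^3 - 8*t + k = 0"
  using IVT[of "\<lambda>t. 8*t^3 - 8*t + k" a 0 b] assms by (auto intro!: continuous_intros)

lemma cubic_zero_le_inv_sqrt3: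
  fixes k :: real
  assumes "0 < k" "k \<le> 16 / (3 * sqrt 3)"
  obtains z where "z \<in> cubic_zeros k" "z \<le> 1 / sqrt 3"
proof -
  define a where "a = 1 / sqrt 3"
  have a: "0 < a" "a < 1" "a^2 = 1/3" unfolding a_def by (simp_all add: power_divide)
  have "a^3 = a * a^2" by (simp add: power3_eq_cube power2_eq_square)
  moreover have "16 / (3 * sqrt 3) = 16 * a / 3" unfolding a_def by simp
  ultimately have "8*a^3 - 8*a + k \<le> 0" using a(3) assms(2) by simp
  then obtain z where z: "z \<in> {0..a}" "8*z^3 - 8*z + k = 0"
    using cubic_zero_between_decreasing[of 0 a k] a(1) assms(1) by auto
  moreover have "z \<noteq> 0" using z(2) assms(1) by auto
  ultimately have "z \<in> cubic_zeros k" using a(2) unfolding cubic_zeros_def by auto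
  then show ?thesis using that z(1) unfolding a_def by simp
qed

lemma cubic_zero_ge_inv_sqrt2:
  fixes k :: real
  assumes "0 < k" "k \<le> 2 * sqrt 2"
  obtains w where "w \<in> cubic_zeros k" "1 / sqrt 2 \<le> w"
proof -
  define b where "b = 1 / sqrt 2"
  have b: "0 < b" "b < 1" "b^2 = 1/2" unfolding b_def by (simp_all add: power_divide)
  have "b^3 = b * b^2" by (simp add: power3_eq_cube power2_eq_square)
  moreover have "2 * sqrt 2 = 4 * b" unfolding b_def by (simp add: field_simps)
  ultimately have "8*b^3 - 8*b + k \<le> 0" using b(3) assms(2) by simp
  then obtain w where w: "w \<in> {b..1}" "8*w^3 - 8*w + k = 0"
    using cubic_zero_between_increasing[of b 1 k] b(2) assms(1) by auto
  moreover have "w \<noteq> 1" using w(2) assms(1) by auto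
  ultimately have "w \<in> cubic_zeros k" using b(1) unfolding cubic_zeros_def by auto
  then show ?thesis using that w(1) unfolding b_def by simp
qed

lemma cubic_zero_sq_le_half:
  fixes k t :: real
  assumes "8*t^3 - 8*t + k = 0" "2 * sqrt 2 \<le> k" "0 < t"
  shows "t^2 \<le> 1/2"
proof (rule ccontr)
  define b where "b = 1 / sqrt 2"
  have b: "0 < b" "b^2 = 1/2" "2 * sqrt 2 = 4 * b" unfolding b_def by (simp_all add: power_divide field_simps)
  assume "\<not> t^2 \<le> 1/2"
  then have "b^2 < t^2" using b(2) by simp
  then have "b < t" using assms(3) by (simp add: power_less_imp_less_base)
  moreover have "0 < t^2 + b*t - b^2" using \<open>b^2 < t^2\<close> mult_pos_pos[OF b(1) assms(3)] by linarith
  ultimately have "0 < (t - b) * (t^2 + b*t - b^2)" by simp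
  also have "\<dots> = t^3 - 2*b^2*t + b*b^2" by (simp add: algebra_simps power2_eq_square power3_eq_cube)
  also have "\<dots> = t^3 - t + b/2" unfolding b(2) by simp
  finally have "0 < t^3 - t + b/2" .
  moreover have "8*t^3 - 8*t + 4*b \<le> 0" using assms(1,2) b(3) by linarith
  ultimately show False by linarith
qed

theorem lemma4:
  fixes k \<theta> :: real
  assumes "0 < k" and "k \<le> 16 / (3 * sqrt 3)" and "cos \<theta> \<noteq> 0"
  shows "(\<bar>cos \<theta>\<bar> = t1 k \<longrightarrow> cmod (y2 k \<theta>) = 1)
       \<and> (\<bar>cos \<theta>\<bar> = t2 k \<longrightarrow>
            (k \<le> 2 * sqrt 2 \<longrightarrow> cmod (y1 k \<theta>) = 1)
          \<and> (2 * sqrt 2 \<le> k \<longrightarrow> cmod (y2 k \<theta>) = 1))"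
proof -
  obtain z where z: "z \<in> cubic_zeros k" "z \<le> 1 / sqrt 3"
    using cubic_zero_le_inv_sqrt3 assms(1,2) by blast
  have fin: "finite (cubic_zeros k)" by (rule finite_cubic_zeros)
  have ne: "cubic_zeros k \<noteq> {}" using z(1) by blast
  have t1: "0 < t1 k" "8*(t1 k)^3 - 8*(t1 k) + k = 0"
    using Min_in[OF fin ne] unfolding t1_def cubic_zeros_def by auto
  have t2: "0 < t2 k" "8*(t2 k)^3 - 8*(t2 k) + k = 0"
    using Max_in[OF fin ne] unfolding t2_def cubic_zeros_def by auto
  have "t1 k \<le> 1 / sqrt 3" using Min_le[OF fin z(1)] z(2) unfolding t1_def by linarith
  then have "(t1 k)^2 \<le> (1 / sqrt 3)^2" using t1(1) by (intro power_mono) auto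
  then have t1_sq: "(t1 k)^2 \<le> 1/2" by (simp add: power_divide)
  have t2_sq: "1/2 \<le> (t2 k)^2" if small: "k \<le> 2 * sqrt 2"
  proof -
    obtain w where w: "w \<in> cubic_zeros k" "1 / sqrt 2 \<le> w"
      using cubic_zero_ge_inv_sqrt2[OF assms(1) small] by blast
    then have "1 / sqrt 2 \<le> t2 k" using Max_ge[OF fin w(1)] unfolding t2_def by linarith
    then have "(1 / sqrt 2)^2 \<le> (t2 k)^2" by (intro power_mono) auto
    then show ?thesis by (simp add: power_divide)
  qed
  show ?thesis
  proof (intro conjI impI)
    show "cmod (y2 k \<theta>) = 1" if "\<bar>cos \<theta>\<bar> = t1 k"
      using cmod_y2_at_cubic_zero[OF t1(2) that t1(1) t1_sq] .
    show "cmod (y1 k \<theta>) = 1" if "\<bar>cos \<theta>\<bar> = t2 k" "k \<le> 2 * sqrt 2"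
      using cmod_y1_at_cubic_zero[OF t2(2) that(1) t2(1) t2_sq[OF that(2)]] .
    show "cmod (y2 k \<theta>) = 1" if "\<bar>cos \<theta>\<bar> = t2 k" "2 * sqrt 2 \<le> k"
      using cmod_y2_at_cubic_zero[OF t2(2) that(1) t2(1) cubic_zero_sq_le_half[OF t2(2) that(2) t2(1)]] .
  qed
qed

end
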